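(* For all integers $v\geq 1$ and $L\geq 0$, \[ \frac{1-q^3}{1-q}\sum_{n_1,\ldots,n_v\geq 0} \frac{q^{\sum_{i=1}^v (N_i+2)N_i+n_v}}{(q)_{n_1}\cdots(q)_{n_{v-1}}(q)_{2n_v+2}}\,\frac{(-1;q^3)_{n_v}}{(-1;q)_{n_v}}\,(1-q^{1+n_v})\,\frac{(q)_{2L}}{(q)_{L-1-N_1}} =\sum_{j=-\infty}^{\infty}\left(\frac{j}{3}\right) q^{\frac{(2v+1)j^2-3j}{2}-(v-1)} {2L \brack L+j}_q, \] where $N_i=n_i+n_{i+1}+\cdots+n_v$ for $i=1,\ldots,v$ (for $v=1$ the product $(q)_{n_1}\cdots(q)_{n_{v-1}}$ is empty).
   Context: For a variable $a$ and integer $n\ge 0$, $(a;q)_n=(1-a)(1-aq)\cdots(1-aq^{n-1})$, and $(q)_n=(q;q)_n$; by convention $1/(q)_n=0$ for negative integers $n$. The $q$-binomial coefficient is ${A \brack B}_q=\frac{(q;q)_A}{(q;q)_B(q;q)_{A-B}}$ if $0\le B\le A$ are integers, and $0$ otherwise. $\left(\frac{j}{3}\right)$ is the Legendre symbol modulo 3: it equals $1$ if $j\equiv 1 \pmod 3$, $-1$ if $j\equiv -1\pmod 3$, and $0$ if $3\mid j$. *)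

theory Defs
  imports "HOL-Analysis.Analysis" "HOL-Number_Theory.Number_Theory"
begin

definition qpoch :: "complex \<Rightarrow> complex \<Rightarrow> nat \<Rightarrow> complex" where
  "qpoch a q n = (\<Prod>k<n. 1 - a * q ^ k)"

definition qfact_inv :: "complex \<Rightarrow> int \<Rightarrow> complex" where
  "qfact_inv q m = (if m < 0 then 0 else 1 / qpoch q q (nat m))"

definition qbinom :: "complex \<Rightarrow> int \<Rightarrow> int \<Rightarrow> complex" where
  "qbinom q A B = (if 0 \<le> B \<and> B \<le> A
     then qpoch q q (nat A) / (qpoch q q (nat B) * qpoch q q (nat (A - B))) else 0)"

end

theory Submission
  imports Defs
begin

text \<open>Both sides come from a Bailey chain relative to a = q^2. The seed pair is
  alpha_j = (j/3) q^((j-1)(j-2)/2) and beta_n = (1+q+q^2) q^n (1-q^(n+1)) (-1;q^3)_n / ((-1;q)_n (q)_{2n+2}).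
  Writing (j/3) = (w^(j mod 3) - w^(2 (j mod 3))) / (w - w^2) for a primitive cube root of unity w
  splits the sum defining beta_n into two sums
  theta_z(M) = sum_j q^((j-1)(j-2)/2) z^(j mod 3) / ((q)_{M-j} (q)_{M+j}) with M = n + 1.
  A three-term relation between the reciprocals 1/((q)_a (q)_b) gives a first-order recurrence
  in M, so each theta_z(M) is a product, and the difference of the two products is beta_n.

  The Bailey lemma, whose kernel sum is a finite Durfee rectangle identity, multiplies alpha_j
  by q^(j^2-1) and replaces beta_n by sum_k q^(k^2+2k) beta_k / (q)_{n-k}. Applied v times and
  evaluated at n = L - 1, the beta-side is the nested sum on the left (the N_i are the successive
  summation indices), and after multiplying by (q)_{2L} the alpha-side is the q-binomial sum on
  the right.\<close>

lemma qpoch_Suc: "qpoch a q (Suc n) = qpoch a q n * (1 - a * q ^ n)"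
  by (simp add: qpoch_def)

lemma qfact_inv_neg: "m < 0 \<Longrightarrow> qfact_inv q m = 0"
  by (simp add: qfact_inv_def)

lemma qfact_inv_of_nat: "qfact_inv q (int n) = 1 / qpoch q q n"
  by (simp add: qfact_inv_def)

lemma qbinom_eq_qfact_inv:
  "0 \<le> A \<Longrightarrow> qbinom q A B = qpoch q q (nat A) * qfact_inv q B * qfact_inv q (A - B)"
  by (simp add: qbinom_def qfact_inv_def)

lemma norm_power_Suc_less_one:
  fixes q :: "'a :: real_normed_div_algebra"
  assumes "norm q < 1"
  shows "norm (q ^ Suc k) < 1"
proof -
  have "norm q ^ Suc k \<le> norm q"
    using assms by (simp add: mult_left_le power_le_one)
  then show ?thesis
    using assms by (simp add: norm_mult norm_power)
qed

lemma power_Suc_neq_one: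
  fixes q :: "'a :: real_normed_div_algebra"
  assumes "norm q < 1"
  shows "q ^ Suc k \<noteq> 1"
  using norm_power_Suc_less_one[OF assms, of k] by auto

lemma sum_atMost_Suc_telescope:
  "A (Suc m) = 0 \<Longrightarrow> B 0 = 0 \<Longrightarrow> (\<Sum>i\<le>Suc m. A i + B i) = (\<Sum>i\<le>m. A i + B (Suc i))"
  by (simp only: sum.distrib sum.atMost_Suc[of A] sum.atMost_Suc_shift[of B] add_0_right add_0_left)

lemma sum_atMost_drop_initial:
  fixes f :: "nat \<Rightarrow> 'a :: comm_monoid_add"
  assumes "\<And>k. k < r \<Longrightarrow> f k = 0"
  shows "(\<Sum>k\<le>r + m. f k) = (\<Sum>i\<le>m. f (i + r))"
proof -
  from assms have "(\<Sum>k\<le>r + m. f k) = (\<Sum>k = 0 + r..m + r. f k)"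
    by (intro sum.mono_neutral_right) auto
  then show ?thesis
    by (simp only: sum.shift_bounds_cl_nat_ivl atLeast0AtMost)
qed

lemma qpoch_minus_one_cube:
  "qpoch (-1) (q ^ 3) n = qpoch (-1) q n * (\<Prod>k<n. 1 - q ^ k + q ^ (2*k))"
proof -
  have "1 + (q ^ 3) ^ k = (1 + q ^ k) * (1 - q ^ k + q ^ (2*k))" for k
  proof -
    have "(q ^ 3) ^ k = (q ^ k) ^ 3" "q ^ (2*k) = (q ^ k)\<^sup>2"
      by (simp_all flip: power_mult add: mult.commute)
    then show ?thesis
      by (simp add: algebra_simps power2_eq_square power3_eq_cube)
  qed
  then show ?thesis
    by (simp add: qpoch_def prod.distrib)
qed

lemma qpoch_minus_one_nonzero:
  assumes "norm q < 1"
  shows "qpoch (-1) q n \<noteq> 0"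
proof -
  have "1 + q ^ k \<noteq> 0" for k
  proof (cases k)
    case (Suc j)
    have "norm (q ^ k) < 1"
      using norm_power_Suc_less_one[OF assms] Suc by simp
    then show ?thesis
      by (metis add_eq_0_iff norm_minus_cancel norm_one order_less_irrefl)
  qed simp
  then show ?thesis
    by (simp add: qpoch_def)
qed

context
  fixes q :: complex
  assumes q: "norm q < 1"
begin

lemma qpoch_nonzero: "qpoch q q n \<noteq> 0"
  using power_Suc_neq_one[OF q] by (simp add: qpoch_def)

lemma qfact_inv_mult_one_minus_power: "qfact_inv q m * (1 - q powi m) = qfact_inv q (m - 1)"
proof (cases "m \<le> 0")
  case True
  then show ?thesis
    by (cases "m = 0") (simp_all add: qfact_inv_def)
next
  case False
  then obtain k where m: "m = int (Suc k)"
    by (metis gr0_implies_Suc not_le zero_less_imp_eq_int)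
  have "1 - q ^ Suc k \<noteq> 0"
    using power_Suc_neq_one[OF q] by simp
  moreover have "qfact_inv q (m - 1) = 1 / qpoch q q k"
    by (simp add: m qfact_inv_def)
  ultimately show ?thesis
    using qpoch_nonzero[of k] unfolding m power_int_of_nat qfact_inv_of_nat
    by (simp add: qpoch_Suc)
qed

lemma qfact_inv_mult_one_minus_power_nat:
  "qfact_inv q (int n) * (1 - q ^ n) = qfact_inv q (int n - 1)"
  using qfact_inv_mult_one_minus_power[of "int n"] by simp

text \<open>A finite form of the Durfee rectangle identity (a case of q-Chu--Vandermonde).\<close>

lemma durfee_sum_step:
  "(1 - q ^ Suc m) * (\<Sum>i\<le>Suc m. q ^ (i*i + c*i) * qfact_inv q (int (Suc m) - int i)
        * qfact_inv q (int i) * qfact_inv q (int c + int i))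
   = (\<Sum>i\<le>m. q ^ (i*i + Suc c * i) * qfact_inv q (int m - int i)
        * qfact_inv q (int i) * qfact_inv q (int (Suc c) + int i))"
proof -
  define A where "A i = q ^ (i*i + c*i + i) * qfact_inv q (int m - int i)
      * qfact_inv q (int i) * qfact_inv q (int c + int i)" for i
  define B where "B i = q ^ (i*i + c*i) * qfact_inv q (int (Suc m) - int i)
      * qfact_inv q (int i - 1) * qfact_inv q (int c + int i)" for i
  have split: "(1 - q ^ Suc m) * (q ^ (i*i + c*i) * qfact_inv q (int (Suc m) - int i)
        * qfact_inv q (int i) * qfact_inv q (int c + int i)) = A i + B i"
    if "i \<le> Suc m" for i
  proof -
    have split_factor: "1 - q ^ Suc m = q ^ i * (1 - q ^ (Suc m - i)) + (1 - q ^ i)"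
      using that by (simp add: algebra_simps flip: power_add)
    have down_m: "qfact_inv q (int (Suc m) - int i) * (1 - q ^ (Suc m - i)) = qfact_inv q (int m - int i)"
      using qfact_inv_mult_one_minus_power_nat[of "Suc m - i"] that by simp
    show ?thesis
      unfolding A_def B_def split_factor
      by (simp add: algebra_simps power_add flip: down_m qfact_inv_mult_one_minus_power_nat)
  qed
  have shift: "A i + B (Suc i) = q ^ (i*i + Suc c * i) * qfact_inv q (int m - int i)
      * qfact_inv q (int i) * qfact_inv q (int (Suc c) + int i)" for i
  proof -
    have down_c: "qfact_inv q (int (Suc c) + int i) * (1 - q ^ (Suc c + i)) = qfact_inv q (int c + int i)"
      using qfact_inv_mult_one_minus_power_nat[of "Suc c + i"] by (simp add: add.assoc)
    have "Suc i * Suc i + c * Suc i = (i*i + c*i + i) + (Suc c + i)"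
      by (simp add: algebra_simps)
    then show ?thesis
      unfolding A_def B_def by (simp add: algebra_simps power_add flip: down_c)
  qed
  have "(1 - q ^ Suc m) * (\<Sum>i\<le>Suc m. q ^ (i*i + c*i) * qfact_inv q (int (Suc m) - int i)
        * qfact_inv q (int i) * qfact_inv q (int c + int i)) = (\<Sum>i\<le>Suc m. A i + B i)"
    unfolding sum_distrib_left by (rule sum.cong[OF refl], rule split) simp
  also have "\<dots> = (\<Sum>i\<le>m. A i + B (Suc i))"
    by (rule sum_atMost_Suc_telescope) (simp_all add: A_def B_def qfact_inv_neg)
  also have "\<dots> = (\<Sum>i\<le>m. q ^ (i*i + Suc c * i) * qfact_inv q (int m - int i)
        * qfact_inv q (int i) * qfact_inv q (int (Suc c) + int i))"
    by (simp only: shift)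
  finally show ?thesis .
qed

lemma durfee_sum:
  "(\<Sum>i\<le>m. q ^ (i*i + c*i) * qfact_inv q (int m - int i) * qfact_inv q (int i) * qfact_inv q (int c + int i))
   = qfact_inv q (int m) * qfact_inv q (int c + int m)"
proof (induction m arbitrary: c)
  case 0
  then show ?case by (simp add: qfact_inv_def qpoch_def)
next
  case (Suc m)
  have "qfact_inv q (int m) * qfact_inv q (int (Suc c) + int m)
      = (1 - q ^ Suc m) * (qfact_inv q (int (Suc m)) * qfact_inv q (int c + int (Suc m)))"
  proof -
    have down: "qfact_inv q (int (Suc m)) * (1 - q ^ Suc m) = qfact_inv q (int m)"
      using qfact_inv_mult_one_minus_power_nat[of "Suc m"] by simp
    have "int c + int (Suc m) = int (Suc c) + int m"
      by simp
    then show ?thesis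
      unfolding down[symmetric] by (simp only: ac_simps)
  qed
  then have "(1 - q ^ Suc m) * (\<Sum>i\<le>Suc m. q ^ (i*i + c*i) * qfact_inv q (int (Suc m) - int i)
        * qfact_inv q (int i) * qfact_inv q (int c + int i))
      = (1 - q ^ Suc m) * (qfact_inv q (int (Suc m)) * qfact_inv q (int c + int (Suc m)))"
    by (simp only: durfee_sum_step Suc.IH)
  moreover have "1 - q ^ Suc m \<noteq> 0"
    using power_Suc_neq_one[OF q] by simp
  ultimately show ?case
    by simp
qed

end

section \<open>Bailey pairs and the Bailey lemma\<close>

text \<open>Bailey pairs relative to \<open>a = q\<^sup>2\<close>, with the classical \<open>\<alpha>\<^sub>r\<close> spread symmetrically over
  \<open>j = \<plusminus>(r + 1)\<close>; the index \<open>j = 0\<close> corresponds to no \<open>r\<close>, hence the hypothesis \<open>\<alpha> 0 = 0\<close> below.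
  The Bailey lemma with \<open>\<rho>\<^sub>1, \<rho>\<^sub>2 \<rightarrow> \<infinity>\<close> transforms \<open>\<beta>\<close> by \<open>bailey_kernel\<close>.\<close>

definition bailey_pair :: "complex \<Rightarrow> (int \<Rightarrow> complex) \<Rightarrow> (nat \<Rightarrow> complex) \<Rightarrow> bool" where
  "bailey_pair q \<alpha> \<beta> \<longleftrightarrow> (\<forall>n. \<beta> n =
     (\<Sum>j = -(int n + 1)..int n + 1. \<alpha> j * qfact_inv q (int n + 1 - j) * qfact_inv q (int n + 1 + j)))"

definition kernel_transform :: "(nat \<Rightarrow> nat \<Rightarrow> 'a :: semiring_0) \<Rightarrow> (nat \<Rightarrow> 'a) \<Rightarrow> nat \<Rightarrow> 'a" where
  "kernel_transform w \<beta> n = (\<Sum>k\<le>n. w n k * \<beta> k)"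

definition bailey_kernel :: "complex \<Rightarrow> nat \<Rightarrow> nat \<Rightarrow> complex" where
  "bailey_kernel q n k = q ^ (k*k + 2*k) * qfact_inv q (int n - int k)"

context
  fixes q :: complex
  assumes q: "norm q < 1"
begin

lemma bailey_kernel_sum_nat:
  "(\<Sum>k\<le>n. q ^ (k*k + 2*k) * qfact_inv q (int n - int k)
      * qfact_inv q (int k - int r) * qfact_inv q (int k + int r + 2))
   = q ^ (r*r + 2*r) * qfact_inv q (int n - int r) * qfact_inv q (int n + int r + 2)"
proof (cases "r \<le> n")
  case False
  then show ?thesis
    by (auto simp: qfact_inv_neg intro!: sum.neutral)
next
  case True
  then obtain m where n: "n = r + m"
    using le_Suc_ex by blast
  define f where "f k = q ^ (k*k + 2*k) * qfact_inv q (int n - int k)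
      * qfact_inv q (int k - int r) * qfact_inv q (int k + int r + 2)" for k
  have "(\<Sum>k\<le>n. f k) = (\<Sum>i\<le>m. f (i + r))"
    unfolding n by (rule sum_atMost_drop_initial) (simp add: f_def qfact_inv_neg)
  also have "\<dots> = q ^ (r*r + 2*r) * (\<Sum>i\<le>m. q ^ (i*i + (2*r + 2) * i)
      * qfact_inv q (int m - int i) * qfact_inv q (int i) * qfact_inv q (int (2*r + 2) + int i))"
  proof -
    have "f (i + r) = q ^ (r*r + 2*r) * (q ^ (i*i + (2*r + 2) * i)
        * qfact_inv q (int m - int i) * qfact_inv q (int i) * qfact_inv q (int (2*r + 2) + int i))" for i
    proof -
      have "(i + r) * (i + r) + 2 * (i + r) = (r*r + 2*r) + (i*i + (2*r + 2) * i)"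
        by (simp add: algebra_simps)
      moreover have "int (i + r) + int r + 2 = int (2*r + 2) + int i"
        by simp
      ultimately show ?thesis
        unfolding f_def n by (simp add: power_add ac_simps)
    qed
    then show ?thesis
      by (simp add: sum_distrib_left)
  qed
  also have "\<dots> = q ^ (r*r + 2*r) * (qfact_inv q (int m) * qfact_inv q (int (2*r + 2) + int m))"
    by (simp only: durfee_sum[OF q])
  also have "\<dots> = q ^ (r*r + 2*r) * qfact_inv q (int n - int r) * qfact_inv q (int n + int r + 2)"
  proof -
    have "int n - int r = int m" "int n + int r + 2 = int (2*r + 2) + int m"
      using n by simp_all
    then show ?thesis
      by (simp only: mult.assoc)
  qed
  finally show ?thesis
    unfolding f_def .
qed

lemma bailey_kernel_sum:
  assumes "j \<noteq> 0"
  shows "(\<Sum>k\<le>n. bailey_kernel q n k * (qfact_inv q (int k + 1 - j) * qfact_inv q (int k + 1 + j)))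
       = q ^ nat (j\<^sup>2 - 1) * (qfact_inv q (int n + 1 - j) * qfact_inv q (int n + 1 + j))"
proof -
  define r where "r = nat (\<bar>j\<bar> - 1)"
  have r: "\<bar>j\<bar> = int r + 1"
    using assms by (simp add: r_def)
  have sym: "qfact_inv q (x - j) * qfact_inv q (x + j) = qfact_inv q (x - int r - 1) * qfact_inv q (x + int r + 1)"
    for x
  proof (cases "j < 0")
    case True
    then have "x - j = x + int r + 1" "x + j = x - int r - 1"
      using r by simp_all
    then show ?thesis
      by (simp only: mult.commute)
  next
    case False
    then have "x - j = x - int r - 1" "x + j = x + int r + 1"
      using r by simp_all
    then show ?thesis
      by (simp only:)
  qed
  have factors: "qfact_inv q (int k + 1 - j) * qfact_inv q (int k + 1 + j)
      = qfact_inv q (int k - int r) * qfact_inv q (int k + int r + 2)" for k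
    using sym[of "int k + 1"] by (simp add: algebra_simps)
  have exponent: "nat (j\<^sup>2 - 1) = r*r + 2*r"
  proof -
    have "j\<^sup>2 = (int r + 1)\<^sup>2"
      by (metis r power2_abs)
    then show ?thesis
      by (simp add: power2_eq_square algebra_simps nat_add_distrib nat_mult_distrib)
  qed
  show ?thesis
    unfolding factors exponent bailey_kernel_def using bailey_kernel_sum_nat[of n r]
    by (simp only: mult.assoc)
qed

lemma bailey_lemma:
  assumes pair: "bailey_pair q \<alpha> \<beta>" and "\<alpha> 0 = 0"
  shows "bailey_pair q (\<lambda>j. q ^ nat (j\<^sup>2 - 1) * \<alpha> j) (kernel_transform (bailey_kernel q) \<beta>)"
  unfolding bailey_pair_def
proof
  fix n
  define J where "J = {-(int n + 1)..int n + 1}"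
  define f where "f k j = qfact_inv q (int k + 1 - j) * qfact_inv q (int k + 1 + j)" for k j
  have \<beta>: "\<beta> k = (\<Sum>j\<in>J. \<alpha> j * f k j)" if "k \<le> n" for k
  proof -
    have "\<beta> k = (\<Sum>j = -(int k + 1)..int k + 1. \<alpha> j * f k j)"
      using pair unfolding bailey_pair_def f_def by (simp add: mult.assoc)
    also have "\<dots> = (\<Sum>j\<in>J. \<alpha> j * f k j)"
      using that by (intro sum.mono_neutral_left) (auto simp: J_def f_def qfact_inv_neg)
    finally show ?thesis .
  qed
  have "kernel_transform (bailey_kernel q) \<beta> n
      = (\<Sum>j\<in>J. \<alpha> j * (\<Sum>k\<le>n. bailey_kernel q n k * f k j))"
    unfolding kernel_transform_def
    by (simp add: \<beta> sum_distrib_left ac_simps sum.swap[of _ J])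
  also have "\<dots> = (\<Sum>j\<in>J. \<alpha> j * (q ^ nat (j\<^sup>2 - 1) * f n j))"
  proof (rule sum.cong[OF refl])
    fix j
    show "\<alpha> j * (\<Sum>k\<le>n. bailey_kernel q n k * f k j) = \<alpha> j * (q ^ nat (j\<^sup>2 - 1) * f n j)"
      using \<open>\<alpha> 0 = 0\<close> bailey_kernel_sum[of j n] unfolding f_def by (cases "j = 0") simp_all
  qed
  finally show "kernel_transform (bailey_kernel q) \<beta> n = (\<Sum>j = -(int n + 1)..int n + 1.
      q ^ nat (j\<^sup>2 - 1) * \<alpha> j * qfact_inv q (int n + 1 - j) * qfact_inv q (int n + 1 + j))"
    by (simp add: J_def f_def ac_simps)
qed

lemma bailey_chain:
  assumes "bailey_pair q \<alpha> \<beta>" and "\<alpha> 0 = 0"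
  shows "bailey_pair q (\<lambda>j. q ^ (k * nat (j\<^sup>2 - 1)) * \<alpha> j) ((kernel_transform (bailey_kernel q) ^^ k) \<beta>)"
proof (induction k)
  case 0
  then show ?case
    using assms(1) by simp
next
  case (Suc k)
  then show ?case
    using bailey_lemma[OF Suc] assms(2) by (simp add: power_add mult.assoc)
qed

end

section \<open>The seed Bailey pair\<close>

definition alpha_exp :: "int \<Rightarrow> int" where
  "alpha_exp j = (j - 1) * (j - 2) div 2"

definition cube_weight :: "complex \<Rightarrow> int \<Rightarrow> complex" where
  "cube_weight z j = z ^ nat (j mod 3)"

definition theta_term :: "complex \<Rightarrow> complex \<Rightarrow> int \<Rightarrow> complex" where
  "theta_term q z j = q powi alpha_exp j * cube_weight z j"

definition theta_sum :: "complex \<Rightarrow> complex \<Rightarrow> nat \<Rightarrow> complex" where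
  "theta_sum q z M = (\<Sum>j = -int M..int M. theta_term q z j * (qfact_inv q (int M - j) * qfact_inv q (int M + j)))"

lemma alpha_exp_nonneg: "0 \<le> alpha_exp j"
proof -
  have "0 \<le> (j - 1) * (j - 2)"
    by (cases "j \<le> 1") (auto simp: zero_le_mult_iff)
  then show ?thesis
    by (simp add: alpha_exp_def)
qed

lemma alpha_exp_eq_0_iff: "alpha_exp j = 0 \<longleftrightarrow> j = 1 \<or> j = 2"
proof
  assume "alpha_exp j = 0"
  then have "(j - 1) * (j - 2) < 2"
    by (simp add: alpha_exp_def)
  moreover have "2 \<le> (j - 1) * (j - 2)" if "j \<le> 0 \<or> 3 \<le> j"
  proof -
    have "1 * 2 \<le> (1 - j) * (2 - j)" if "j \<le> 0"
      using that by (intro mult_mono) auto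
    moreover have "2 * 1 \<le> (j - 1) * (j - 2)" if "3 \<le> j"
      using that by (intro mult_mono) auto
    ultimately show ?thesis
      using that by (auto simp: algebra_simps)
  qed
  ultimately show "j = 1 \<or> j = 2"
    by force
qed (auto simp: alpha_exp_def)

lemma alpha_exp_Suc: "alpha_exp (j + 1) = alpha_exp j + (j - 1)"
proof -
  have "(j + 1 - 1) * (j + 1 - 2) = (j - 1) * (j - 2) + 2 * (j - 1)"
    by (simp add: algebra_simps)
  then show ?thesis
    by (simp add: alpha_exp_def)
qed

lemma cube_weight_Suc: "z ^ 3 = 1 \<Longrightarrow> cube_weight z (j + 1) = z * cube_weight z j"
proof -
  assume z: "z ^ 3 = 1"
  have "j mod 3 = 0 \<or> j mod 3 = 1 \<or> j mod 3 = 2"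
    by arith
  moreover have "(j + 1) mod 3 = (if j mod 3 = 2 then 0 else j mod 3 + 1)"
    by presburger
  ultimately show ?thesis
    using z by (auto simp: cube_weight_def numeral_3_eq_3 nat_add_distrib power2_eq_square)
qed

lemma power3_eq_one_if_root: "z\<^sup>2 + z + 1 = 0 \<Longrightarrow> z ^ 3 = (1 :: 'a :: comm_ring_1)"
proof -
  assume "z\<^sup>2 + z + 1 = 0"
  moreover have "z ^ 3 - 1 = (z - 1) * (z\<^sup>2 + z + 1)"
    by (simp add: algebra_simps power2_eq_square power3_eq_cube)
  ultimately show ?thesis
    by simp
qed

lemma primitive_cube_root_factor:
  fixes z x :: "'a :: comm_ring_1"
  assumes z: "z\<^sup>2 + z + 1 = 0"
  shows "(1 + z\<^sup>2 * x) * (1 + z * x) = 1 - x + x\<^sup>2"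
proof -
  have "(1 + z\<^sup>2 * x) * (1 + z * x) - (1 - x + x\<^sup>2) = (z\<^sup>2 + z + 1) * (x + x\<^sup>2 * (z - 1))"
    using power3_eq_one_if_root[OF z] by (simp add: algebra_simps power2_eq_square power3_eq_cube)
  then show ?thesis
    unfolding z by simp
qed

lemma Legendre_mod_3: "Legendre j 3 = (if j mod 3 = 1 then 1 else if j mod 3 = 2 then -1 else 0)"
proof -
  have "[Legendre j 3 = j] (mod 3)"
    using euler_criterion[of 3 j] by simp
  moreover have "Legendre j 3 \<in> {-1, 0, 1}"
    by (simp add: Legendre_def)
  ultimately show ?thesis
    by (auto simp: cong_def)
qed

lemma sum_int_shift: "(\<Sum>j = a..b. g j) = (\<Sum>i = a - d..b - d. g (i + d))" for a b d :: int
  by (rule sum.reindex_bij_witness[where i = "\<lambda>i. i + d" and j = "\<lambda>j. j - d"]) auto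

lemma sum_qfact_inv_window:
  assumes "a \<le> -int M" "int M \<le> b"
  shows "(\<Sum>j = a..b. g j * (qfact_inv q (int M - j) * qfact_inv q (int M + j)))
       = (\<Sum>j = -int M..int M. g j * (qfact_inv q (int M - j) * qfact_inv q (int M + j)))"
  using assms by (intro sum.mono_neutral_right) (auto simp: qfact_inv_neg)

context
  fixes q :: complex
  assumes q: "norm q < 1" and q0: "q \<noteq> 0"
begin

lemma qfact_inv_three_term:
  "(1 - q powi (a + b + 1)) * (1 - q powi (a + b + 2)) * qfact_inv q (a + 1) * qfact_inv q (b + 1)
   = q powi (a + 1) * qfact_inv q (a + 1) * qfact_inv q (b - 1)
     + (1 + q powi (a + b + 1)) * qfact_inv q a * qfact_inv q b
     + q powi (b + 1) * qfact_inv q (a - 1) * qfact_inv q (b + 1)"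
proof (cases "a \<le> -2 \<or> b \<le> -2")
  case True
  then show ?thesis
    by (auto simp: qfact_inv_neg)
next
  case False
  have down: "qfact_inv q (x - 1) = qfact_inv q (x + 1) * (1 - q powi (x + 1)) * (1 - q powi x)"
    "qfact_inv q x = qfact_inv q (x + 1) * (1 - q powi (x + 1))" for x
    using qfact_inv_mult_one_minus_power[OF q, of x] qfact_inv_mult_one_minus_power[OF q, of "x + 1"]
    by simp_all
  have "q powi (a + 1) = q powi a * q" "q powi (b + 1) = q powi b * q"
    "q powi (a + b + 1) = q powi a * q powi b * q" "q powi (a + b + 2) = q powi a * q powi b * q\<^sup>2"
    using q0 by (simp_all add: power_int_add)
  then show ?thesis
    unfolding down[of a] down[of b] by (simp add: algebra_simps power2_eq_square)
qed

lemma theta_term_Suc: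
  assumes "z ^ 3 = 1"
  shows "theta_term q z (j + 1) = z * q powi (j - 1) * theta_term q z j"
  unfolding theta_term_def alpha_exp_Suc cube_weight_Suc[OF assms] using q0 by (simp add: power_int_add ac_simps)

lemma theta_term_pred: "z ^ 3 = 1 \<Longrightarrow> theta_term q z (j - 1) = z\<^sup>2 * q powi (2 - j) * theta_term q z j"
proof -
  assume z: "z ^ 3 = 1"
  have "z\<^sup>2 * q powi (2 - j) * theta_term q z j = z ^ 3 * (q powi (2 - j) * q powi (j - 2)) * theta_term q z (j - 1)"
    using theta_term_Suc[OF z, of "j - 1"] by (simp add: power2_eq_square power3_eq_cube ac_simps)
  then show ?thesis
    using z q0 by (simp flip: power_int_add)
qed

lemma theta_sum_shift_down:
  assumes z: "z ^ 3 = 1"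
  shows "(\<Sum>j = -int (Suc M)..int (Suc M). theta_term q z j * q powi (int M - j + 1)
            * (qfact_inv q (int M - (j - 1)) * qfact_inv q (int M + (j - 1))))
       = z * q powi (int M - 1) * theta_sum q z M"
proof -
  have "(\<Sum>j = -int (Suc M)..int (Suc M). theta_term q z j * q powi (int M - j + 1)
            * (qfact_inv q (int M - (j - 1)) * qfact_inv q (int M + (j - 1))))
      = (\<Sum>i = -int (Suc M) - 1..int (Suc M) - 1. theta_term q z (i + 1) * q powi (int M - i)
            * (qfact_inv q (int M - i) * qfact_inv q (int M + i)))"
    by (subst sum_int_shift[where d = 1]) simp
  also have "\<dots> = (\<Sum>i = -int (Suc M) - 1..int (Suc M) - 1. z * q powi (int M - 1) * theta_term q z i
            * (qfact_inv q (int M - i) * qfact_inv q (int M + i)))"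
  proof (intro sum.cong refl)
    fix i
    have "theta_term q z (i + 1) * q powi (int M - i) = z * (q powi (i - 1) * q powi (int M - i)) * theta_term q z i"
      unfolding theta_term_Suc[OF z] by (simp add: ac_simps)
    then show "theta_term q z (i + 1) * q powi (int M - i) * (qfact_inv q (int M - i) * qfact_inv q (int M + i))
        = z * q powi (int M - 1) * theta_term q z i * (qfact_inv q (int M - i) * qfact_inv q (int M + i))"
      using q0 by (simp flip: power_int_add)
  qed
  also have "\<dots> = (\<Sum>i = -int M..int M. z * q powi (int M - 1) * theta_term q z i
            * (qfact_inv q (int M - i) * qfact_inv q (int M + i)))"
    by (rule sum_qfact_inv_window) simp_all
  finally show ?thesis
    by (simp add: theta_sum_def sum_distrib_left mult.assoc)
qed

lemma theta_sum_shift_up: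
  assumes z: "z ^ 3 = 1"
  shows "(\<Sum>j = -int (Suc M)..int (Suc M). theta_term q z j * q powi (int M + j + 1)
            * (qfact_inv q (int M - (j + 1)) * qfact_inv q (int M + (j + 1))))
       = z\<^sup>2 * q ^ (M + 2) * theta_sum q z M"
proof -
  have "(\<Sum>j = -int (Suc M)..int (Suc M). theta_term q z j * q powi (int M + j + 1)
            * (qfact_inv q (int M - (j + 1)) * qfact_inv q (int M + (j + 1))))
      = (\<Sum>i = -int (Suc M) + 1..int (Suc M) + 1. theta_term q z (i - 1) * q powi (int M + i)
            * (qfact_inv q (int M - i) * qfact_inv q (int M + i)))"
    by (subst sum_int_shift[where d = "-1"]) simp
  also have "\<dots> = (\<Sum>i = -int (Suc M) + 1..int (Suc M) + 1. z\<^sup>2 * q powi (int M + 2) * theta_term q z i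
            * (qfact_inv q (int M - i) * qfact_inv q (int M + i)))"
  proof (intro sum.cong refl)
    fix i
    have "theta_term q z (i - 1) * q powi (int M + i) = z\<^sup>2 * (q powi (2 - i) * q powi (int M + i)) * theta_term q z i"
      unfolding theta_term_pred[OF z] by (simp add: ac_simps)
    then show "theta_term q z (i - 1) * q powi (int M + i) * (qfact_inv q (int M - i) * qfact_inv q (int M + i))
        = z\<^sup>2 * q powi (int M + 2) * theta_term q z i * (qfact_inv q (int M - i) * qfact_inv q (int M + i))"
      using q0 by (simp add: add.commute flip: power_int_add)
  qed
  also have "\<dots> = (\<Sum>i = -int M..int M. z\<^sup>2 * q powi (int M + 2) * theta_term q z i
            * (qfact_inv q (int M - i) * qfact_inv q (int M + i)))"
    by (rule sum_qfact_inv_window) simp_all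
  also have "q powi (int M + 2) = q ^ (M + 2)"
    by (metis of_nat_add of_nat_numeral power_int_of_nat)
  finally show ?thesis
    by (simp add: theta_sum_def sum_distrib_left mult.assoc)
qed

lemma theta_sum_recurrence:
  assumes z: "z ^ 3 = 1"
  shows "(1 - q ^ (2*M + 1)) * (1 - q ^ (2*M + 2)) * theta_sum q z (Suc M)
       = theta_sum q z M * (1 + z * q powi (int M - 1)) * (1 + z\<^sup>2 * q ^ (M + 2))"
proof -
  define f where "f j = qfact_inv q (int M - j) * qfact_inv q (int M + j)" for j
  define Q where "Q = q powi (2 * int M + 1)"
  have "Q = q ^ (2*M + 1)" and Q2: "q powi (2 * int M + 2) = q ^ (2*M + 2)"
    using power_int_of_nat[of q "2*M + 1"] power_int_of_nat[of q "2*M + 2"]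
    by (simp_all add: Q_def add.commute)
  have three_term: "(1 - Q) * (1 - q powi (2 * int M + 2))
        * (theta_term q z j * (qfact_inv q (int (Suc M) - j) * qfact_inv q (int (Suc M) + j)))
      = theta_term q z j * q powi (int M - j + 1) * f (j - 1) + (1 + Q) * (theta_term q z j * f j)
        + theta_term q z j * q powi (int M + j + 1) * f (j + 1)" for j
    using arg_cong[OF qfact_inv_three_term[of "int M - j" "int M + j"], of "(*) (theta_term q z j)"]
    by (simp add: Q_def f_def algebra_simps)
  have middle: "(\<Sum>j = -int (Suc M)..int (Suc M). (1 + Q) * (theta_term q z j * f j)) = (1 + Q) * theta_sum q z M"
    unfolding f_def sum_distrib_left[symmetric] theta_sum_def by (rule arg_cong[OF sum_qfact_inv_window]) simp_all
  have "(1 - Q) * (1 - q powi (2 * int M + 2)) * theta_sum q z (Suc M)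
      = z * q powi (int M - 1) * theta_sum q z M + (1 + Q) * theta_sum q z M + z\<^sup>2 * q ^ (M + 2) * theta_sum q z M"
    unfolding theta_sum_def[of q z "Suc M"] sum_distrib_left three_term sum.distrib middle
    unfolding f_def theta_sum_shift_down[OF z] theta_sum_shift_up[OF z] ..
  also have "\<dots> = theta_sum q z M * (1 + z * q powi (int M - 1)) * (1 + z\<^sup>2 * q ^ (M + 2))"
  proof -
    have "q ^ (M + 2) = q powi (int M + 2)"
      by (metis of_nat_add of_nat_numeral power_int_of_nat)
    then have "z ^ 3 * (q powi (int M - 1) * q ^ (M + 2)) = Q"
      using z q0 by (simp add: Q_def flip: power_int_add)
    then show ?thesis
      by (simp add: algebra_simps power2_eq_square power3_eq_cube)
  qed
  finally show ?thesis
    unfolding \<open>Q = q ^ (2*M + 1)\<close> Q2 .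
qed

lemma theta_sum_one:
  assumes z: "z\<^sup>2 + z + 1 = 0"
  shows "qpoch q q 2 * theta_sum q z 1 = - ((1 + z\<^sup>2) * (1 + z\<^sup>2 * q) * (1 + z\<^sup>2 * q\<^sup>2))"
proof -
  have "theta_sum q z 0 * (1 + z * q powi (int 0 - 1)) = q + z"
    using q0 by (simp add: theta_sum_def theta_term_def alpha_exp_def cube_weight_def qfact_inv_def qpoch_def
        power_int_minus field_simps)
  then have "(1 - q) * (1 - q\<^sup>2) * theta_sum q z 1 = (q + z) * (1 + z\<^sup>2 * q\<^sup>2)"
    using theta_sum_recurrence[OF power3_eq_one_if_root[OF z], of 0] by (simp add: power2_eq_square)
  also have "\<dots> = - ((1 + z\<^sup>2) * (1 + z\<^sup>2 * q) * (1 + z\<^sup>2 * q\<^sup>2))"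
  proof -
    have "(q + z) * (1 + z\<^sup>2 * q\<^sup>2) + (1 + z\<^sup>2) * (1 + z\<^sup>2 * q) * (1 + z\<^sup>2 * q\<^sup>2)
        = (z\<^sup>2 + z + 1) * ((1 + z\<^sup>2 * q\<^sup>2) * (1 + q * (z\<^sup>2 - z + 1)))"
      by (simp add: algebra_simps power2_eq_square)
    then show ?thesis
      unfolding z by (simp add: eq_neg_iff_add_eq_0)
  qed
  moreover have "qpoch q q 2 = (1 - q) * (1 - q\<^sup>2)"
    by (simp add: qpoch_def numeral_2_eq_2 power2_eq_square)
  ultimately show ?thesis
    by simp
qed

lemma theta_sum_closed_form:
  assumes z: "z\<^sup>2 + z + 1 = 0"
  shows "qpoch q q (2*M + 2) * theta_sum q z (Suc M) = - (\<Prod>k<M. 1 - q ^ k + q ^ (2*k))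
      * ((1 + z\<^sup>2 * q ^ M) * (1 + z\<^sup>2 * q ^ (M + 1)) * (1 + z\<^sup>2 * q ^ (M + 2)))"
proof (induction M)
  case 0
  then show ?case
    using theta_sum_one[OF z] by (simp add: power2_eq_square numeral_2_eq_2)
next
  case (Suc M)
  have "q ^ (2*M) = (q ^ M)\<^sup>2"
    by (metis power_mult mult.commute)
  then have factor: "(1 + z\<^sup>2 * q ^ M) * (1 + z * q ^ M) = 1 - q ^ M + q ^ (2*M)"
    by (simp add: primitive_cube_root_factor[OF z])
  have "q powi (int (Suc M) - 1) = q ^ M"
    by simp
  then have "(1 - q ^ (2 * Suc M + 1)) * (1 - q ^ (2 * Suc M + 2)) * theta_sum q z (Suc (Suc M))
      = theta_sum q z (Suc M) * (1 + z * q ^ M) * (1 + z\<^sup>2 * q ^ (Suc M + 2))"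
    using theta_sum_recurrence[OF power3_eq_one_if_root[OF z], of "Suc M"] by simp
  moreover have "qpoch q q (2 * Suc M + 2)
      = qpoch q q (2*M + 2) * ((1 - q ^ (2 * Suc M + 1)) * (1 - q ^ (2 * Suc M + 2)))"
    by (simp add: qpoch_Suc)
  ultimately have "qpoch q q (2 * Suc M + 2) * theta_sum q z (Suc (Suc M))
      = qpoch q q (2*M + 2) * theta_sum q z (Suc M) * ((1 + z * q ^ M) * (1 + z\<^sup>2 * q ^ (Suc M + 2)))"
    by (simp only: mult.assoc)
  also have "\<dots> = - ((\<Prod>k<M. 1 - q ^ k + q ^ (2*k)) * ((1 + z\<^sup>2 * q ^ M) * (1 + z * q ^ M)))
      * ((1 + z\<^sup>2 * q ^ (M + 1)) * (1 + z\<^sup>2 * q ^ (M + 2)) * (1 + z\<^sup>2 * q ^ (Suc M + 2)))"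
    unfolding Suc.IH by (simp add: ac_simps)
  finally show ?case
    by (simp add: factor)
qed

end

definition \<omega> :: complex where
  "\<omega> = Complex (-1/2) (sqrt 3 / 2)"

lemma omega_root: "\<omega>\<^sup>2 + \<omega> + 1 = 0"
  by (simp add: \<omega>_def complex_eq_iff power2_eq_square)

lemma omega_cube: "\<omega> ^ 3 = 1"
  using omega_root by (rule power3_eq_one_if_root)

lemma omega_pow4: "\<omega> ^ 4 = \<omega>"
  using omega_cube by (simp add: power_numeral_reduce)

lemma omega_sq_sq: "(\<omega>\<^sup>2)\<^sup>2 = \<omega>"
  using omega_pow4 by (simp flip: power_mult)

lemma omega_sq_root: "(\<omega>\<^sup>2)\<^sup>2 + \<omega>\<^sup>2 + 1 = 0"
  unfolding omega_sq_sq using omega_root by (simp add: add_ac)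

lemma omega_neq_sq: "\<omega> - \<omega>\<^sup>2 \<noteq> 0"
proof
  assume "\<omega> - \<omega>\<^sup>2 = 0"
  then have "Im \<omega> = Im (\<omega>\<^sup>2)"
    by simp
  then show False
    by (simp add: \<omega>_def power2_eq_square)
qed

lemma Legendre_eq_cube_weight:
  "of_int (Legendre j 3) = (cube_weight \<omega> j - cube_weight (\<omega>\<^sup>2) j) / (\<omega> - \<omega>\<^sup>2)"
proof -
  have "j mod 3 = 0 \<or> j mod 3 = 1 \<or> j mod 3 = 2"
    by arith
  moreover have "(\<omega>\<^sup>2 - \<omega>) / (\<omega> - \<omega>\<^sup>2) = -1"
    using omega_neq_sq by (simp add: field_simps)
  ultimately show ?thesis
    using omega_neq_sq by (auto simp: Legendre_mod_3 cube_weight_def omega_pow4 simp flip: power_mult)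
qed

definition alpha_seed :: "complex \<Rightarrow> int \<Rightarrow> complex" where
  "alpha_seed q j = of_int (Legendre j 3) * q ^ nat (alpha_exp j)"

text \<open>The product in \<open>beta_seed\<close> is \<open>(-1;q\<^sup>3)\<^sub>n / (-1;q)\<^sub>n\<close>, see \<open>qpoch_minus_one_cube\<close>.\<close>

definition beta_seed :: "complex \<Rightarrow> nat \<Rightarrow> complex" where
  "beta_seed q n = (1 + q + q\<^sup>2) * q ^ n * (1 - q ^ Suc n)
      * (\<Prod>k<n. 1 - q ^ k + q ^ (2*k)) * qfact_inv q (int (2*n + 2))"

lemma alpha_seed_0 [simp]: "alpha_seed q 0 = 0"
  by (simp add: alpha_seed_def Legendre_mod_3)

text \<open>The recurrence for \<open>theta_sum\<close> involves negative powers of \<open>q\<close>, so \<open>q = 0\<close> is checked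
  directly.\<close>

lemma bailey_pair_seed_at_0: "bailey_pair 0 (alpha_seed 0) (beta_seed 0)"
  unfolding bailey_pair_def
proof
  fix n
  have "alpha_seed 0 j = (if j = 1 then 1 else if j = 2 then -1 else 0)" for j
    using alpha_exp_eq_0_iff[of j] alpha_exp_nonneg[of j] by (auto simp: alpha_seed_def Legendre_mod_3)
  moreover have "qfact_inv 0 m = 1" if "0 \<le> m" for m
    using that by (simp add: qfact_inv_def qpoch_def)
  ultimately have "(\<Sum>j = -(int n + 1)..int n + 1. alpha_seed 0 j * qfact_inv 0 (int n + 1 - j) * qfact_inv 0 (int n + 1 + j))
      = (\<Sum>j = -(int n + 1)..int n + 1. (if j = 1 then 1 else if j = 2 then -1 else 0))"
    by (intro sum.cong) auto
  also have "\<dots> = 0 ^ n"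
    by (cases n) (simp_all add: sum.If_cases)
  also have "0 ^ n = beta_seed 0 n"
    by (simp add: beta_seed_def qfact_inv_def qpoch_def power_0_left)
  finally show "beta_seed 0 n = (\<Sum>j = -(int n + 1)..int n + 1.
      alpha_seed 0 j * qfact_inv 0 (int n + 1 - j) * qfact_inv 0 (int n + 1 + j))" ..
qed

lemma omega_cube_product_diff:
  "(1 + \<omega> * x) * (1 + \<omega> * (q * x)) * (1 + \<omega> * (q\<^sup>2 * x))
     - (1 + \<omega>\<^sup>2 * x) * (1 + \<omega>\<^sup>2 * (q * x)) * (1 + \<omega>\<^sup>2 * (q\<^sup>2 * x))
   = (\<omega> - \<omega>\<^sup>2) * ((1 + q + q\<^sup>2) * x * (1 - q * x))"
proof -
  have "(1 + \<omega> * x) * (1 + \<omega> * (q * x)) * (1 + \<omega> * (q\<^sup>2 * x))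
     - (1 + \<omega>\<^sup>2 * x) * (1 + \<omega>\<^sup>2 * (q * x)) * (1 + \<omega>\<^sup>2 * (q\<^sup>2 * x))
     - (\<omega> - \<omega>\<^sup>2) * ((1 + q + q\<^sup>2) * x * (1 - q * x))
   = (\<omega>\<^sup>2 + \<omega> + 1) * ((1 - \<omega>) * (q * x\<^sup>2 * (1 + q + q\<^sup>2) * \<omega> + q ^ 3 * x ^ 3 * \<omega> ^ 3))"
    by (simp add: algebra_simps power2_eq_square power3_eq_cube)
  then show ?thesis
    unfolding omega_root by simp
qed

lemma alpha_seed_eq_theta_term:
  "alpha_seed q j = (theta_term q \<omega> j - theta_term q (\<omega>\<^sup>2) j) / (\<omega> - \<omega>\<^sup>2)"
  using alpha_exp_nonneg[of j]
  by (simp add: alpha_seed_def theta_term_def Legendre_eq_cube_weight power_int_def algebra_simps)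

lemma theta_sum_difference:
  assumes q: "norm q < 1" and q0: "q \<noteq> 0"
  shows "qpoch q q (2*n + 2) * (theta_sum q \<omega> (Suc n) - theta_sum q (\<omega>\<^sup>2) (Suc n))
       = (\<Prod>k<n. 1 - q ^ k + q ^ (2*k)) * ((\<omega> - \<omega>\<^sup>2) * ((1 + q + q\<^sup>2) * q ^ n * (1 - q * q ^ n)))"
proof -
  have powers: "q ^ (n + 1) = q * q ^ n" "q ^ (n + 2) = q\<^sup>2 * q ^ n"
    by (simp_all add: power_add power2_eq_square mult.commute)
  note closed = theta_sum_closed_form[OF q q0 omega_root, of n] theta_sum_closed_form[OF q q0 omega_sq_root, of n]
  have "- P * a - - P * b = P * (b - a)" for P a b :: complex
    by (simp add: algebra_simps)
  then show ?thesis
    unfolding right_diff_distrib[of "qpoch q q (2*n + 2)"] closed powers omega_sq_sq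
    by (simp only: flip: omega_cube_product_diff)
qed

lemma bailey_pair_seed:
  assumes q: "norm q < 1"
  shows "bailey_pair q (alpha_seed q) (beta_seed q)"
proof (cases "q = 0")
  case True
  then show ?thesis
    using bailey_pair_seed_at_0 by simp
next
  case False
  show ?thesis
    unfolding bailey_pair_def
  proof
    fix n
    have "(\<Sum>j = -(int n + 1)..int n + 1. alpha_seed q j * qfact_inv q (int n + 1 - j) * qfact_inv q (int n + 1 + j))
        = (theta_sum q \<omega> (Suc n) - theta_sum q (\<omega>\<^sup>2) (Suc n)) / (\<omega> - \<omega>\<^sup>2)"
      by (simp add: alpha_seed_eq_theta_term theta_sum_def sum_subtractf add.commute left_diff_distrib mult.assoc
          flip: sum_divide_distrib)
    also have "\<dots> = (\<Prod>k<n. 1 - q ^ k + q ^ (2*k)) * ((1 + q + q\<^sup>2) * q ^ n * (1 - q * q ^ n))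
        / qpoch q q (2*n + 2)"
      using theta_sum_difference[OF q False, of n] qpoch_nonzero[OF q, of "2*n + 2"] omega_neq_sq
      by (simp add: field_simps)
    also have "\<dots> = beta_seed q n"
      unfolding beta_seed_def qfact_inv_of_nat by simp
    finally show "beta_seed q n = (\<Sum>j = -(int n + 1)..int n + 1.
        alpha_seed q j * qfact_inv q (int n + 1 - j) * qfact_inv q (int n + 1 + j))" ..
  qed
qed

section \<open>Chains over weak compositions\<close>

text \<open>A function \<open>n\<close> supported on \<open>{a..v}\<close> encodes the decreasing chain \<open>N\<^sub>a \<ge> \<dots> \<ge> N\<^sub>v\<close> of its
  tail sums; these are the \<open>N\<^sub>i\<close> of the theorem.\<close>

definition tail_sum :: "nat \<Rightarrow> (nat \<Rightarrow> nat) \<Rightarrow> nat \<Rightarrow> nat" where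
  "tail_sum v n i = (\<Sum>k = i..v. n k)"

definition weak_compositions :: "nat \<Rightarrow> nat \<Rightarrow> nat \<Rightarrow> (nat \<Rightarrow> nat) set" where
  "weak_compositions v a M = {n. (\<forall>i. i \<notin> {a..v} \<longrightarrow> n i = 0) \<and> tail_sum v n a = M}"

definition chain_weight ::
    "(nat \<Rightarrow> nat \<Rightarrow> 'a :: comm_semiring_1) \<Rightarrow> (nat \<Rightarrow> 'a) \<Rightarrow> nat \<Rightarrow> nat \<Rightarrow> (nat \<Rightarrow> nat) \<Rightarrow> 'a" where
  "chain_weight w \<sigma> v a n = (\<Prod>i = a..<v. w (tail_sum v n i) (tail_sum v n (Suc i))) * \<sigma> (tail_sum v n v)"

lemma tail_sum_Suc: "a \<le> v \<Longrightarrow> tail_sum v n a = n a + tail_sum v n (Suc a)"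
  unfolding tail_sum_def by (rule sum.atLeast_Suc_atMost)

lemma tail_sum_upd: "a < i \<Longrightarrow> tail_sum v (n(a := x)) i = tail_sum v n i"
  unfolding tail_sum_def by (rule sum.cong) auto

lemma member_le_tail_sum: "i \<in> {a..v} \<Longrightarrow> n i \<le> tail_sum v n a"
  unfolding tail_sum_def by (rule member_le_sum) auto

lemma finite_bounded_supported:
  "finite {n :: nat \<Rightarrow> nat. (\<forall>i. i \<notin> {a..v} \<longrightarrow> n i = 0) \<and> tail_sum v n a \<le> K}"
proof (rule finite_subset)
  show "{n. (\<forall>i. i \<notin> {a..v} \<longrightarrow> n i = 0) \<and> tail_sum v n a \<le> K}
      \<subseteq> {n. \<forall>i. (i \<in> {a..v} \<longrightarrow> n i \<in> {0..K}) \<and> (i \<notin> {a..v} \<longrightarrow> n i = 0)}"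
  proof
    fix n
    assume "n \<in> {n. (\<forall>i. i \<notin> {a..v} \<longrightarrow> n i = 0) \<and> tail_sum v n a \<le> K}"
    then have "\<forall>i. i \<notin> {a..v} \<longrightarrow> n i = 0" "tail_sum v n a \<le> K"
      by auto
    moreover have "n i \<le> K" if "i \<in> {a..v}" for i
      using member_le_tail_sum[OF that, of n] calculation(2) by linarith
    ultimately show "n \<in> {n. \<forall>i. (i \<in> {a..v} \<longrightarrow> n i \<in> {0..K}) \<and> (i \<notin> {a..v} \<longrightarrow> n i = 0)}"
      by auto
  qed
  show "finite {n :: nat \<Rightarrow> nat. \<forall>i. (i \<in> {a..v} \<longrightarrow> n i \<in> {0..K}) \<and> (i \<notin> {a..v} \<longrightarrow> n i = 0)}"
    by (rule finite_set_of_finite_funs) auto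
qed

lemma finite_weak_compositions: "finite (weak_compositions v a M)"
proof (rule finite_subset)
  show "weak_compositions v a M \<subseteq> {n. (\<forall>i. i \<notin> {a..v} \<longrightarrow> n i = 0) \<and> tail_sum v n a \<le> M}"
    by (auto simp: weak_compositions_def)
qed (rule finite_bounded_supported)

lemma weak_compositions_top: "weak_compositions v v M = {(\<lambda>i. if i = v then M else 0)}"
proof -
  have "n = (\<lambda>i. if i = v then M else 0)" if "n \<in> weak_compositions v v M" for n
    using that by (auto simp: weak_compositions_def tail_sum_def)
  moreover have "(\<lambda>i. if i = v then M else 0) \<in> weak_compositions v v M"
    by (simp add: weak_compositions_def tail_sum_def)
  ultimately show ?thesis
    by blast
qed

lemma sum_weak_compositions_Suc:
  assumes "a < v"
  shows "(\<Sum>n\<in>weak_compositions v a M. f n)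
       = (\<Sum>t\<le>M. \<Sum>n\<in>weak_compositions v (Suc a) t. f (n(a := M - t)))"
proof -
  define split where "split n = (tail_sum v n (Suc a), n(a := 0))" for n :: "nat \<Rightarrow> nat"
  define join where "join p = (snd p)(a := M - fst p)" for p :: "nat \<times> (nat \<Rightarrow> nat)"
  have "(\<Sum>n\<in>weak_compositions v a M. f n) = (\<Sum>p\<in>Sigma {..M} (weak_compositions v (Suc a)). f (join p))"
  proof (rule sum.reindex_bij_witness[of _ join split])
    fix n
    assume n: "n \<in> weak_compositions v a M"
    then have M: "M = n a + tail_sum v n (Suc a)"
      using assms tail_sum_Suc[of a v n] by (simp add: weak_compositions_def)
    show "join (split n) = n"
      using M by (auto simp: join_def split_def)
    then show "f (join (split n)) = f n"
      by simp
    show "split n \<in> Sigma {..M} (weak_compositions v (Suc a))"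
      using n M by (auto simp: weak_compositions_def split_def tail_sum_upd)
  next
    fix p
    assume p: "p \<in> Sigma {..M} (weak_compositions v (Suc a))"
    then have t: "fst p \<le> M" "tail_sum v (snd p) (Suc a) = fst p"
      and n: "\<And>i. i \<notin> {Suc a..v} \<Longrightarrow> snd p i = 0"
      by (auto simp: weak_compositions_def)
    show "split (join p) = p"
      using t n[of a] by (cases p) (auto simp: split_def join_def tail_sum_upd)
    show "join p \<in> weak_compositions v a M"
      using assms t n tail_sum_Suc[of a v "join p"]
      by (auto simp: weak_compositions_def join_def tail_sum_upd)
  qed
  also have "\<dots> = (\<Sum>t\<le>M. \<Sum>n\<in>weak_compositions v (Suc a) t. f (n(a := M - t)))"
    by (subst sum.Sigma) (auto simp: join_def finite_weak_compositions split_beta)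
  finally show ?thesis .
qed

lemma sum_chain_weight:
  assumes "a \<le> v"
  shows "(\<Sum>n\<in>weak_compositions v a M. chain_weight w \<sigma> v a n) = (kernel_transform w ^^ (v - a)) \<sigma> M"
  using assms
proof (induction "v - a" arbitrary: a M)
  case 0
  then have "a = v"
    by simp
  then show ?case
    by (simp add: weak_compositions_top chain_weight_def tail_sum_def)
next
  case (Suc d)
  then have a: "a < v" and d: "d = v - Suc a"
    by simp_all
  have step: "chain_weight w \<sigma> v a (n(a := M - t)) = w M t * chain_weight w \<sigma> v (Suc a) n"
    if "n \<in> weak_compositions v (Suc a) t" "t \<le> M" for n t
  proof -
    have "tail_sum v (n(a := M - t)) a = M"
      using that a tail_sum_Suc[of a v "n(a := M - t)"] by (simp add: weak_compositions_def tail_sum_upd)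
    moreover have "tail_sum v n (Suc a) = t"
      using that(1) by (simp add: weak_compositions_def)
    ultimately show ?thesis
      using a by (simp add: chain_weight_def prod.atLeast_Suc_lessThan tail_sum_upd mult.assoc)
  qed
  have "(\<Sum>n\<in>weak_compositions v a M. chain_weight w \<sigma> v a n)
      = (\<Sum>t\<le>M. w M t * (\<Sum>n\<in>weak_compositions v (Suc a) t. chain_weight w \<sigma> v (Suc a) n))"
    by (simp add: sum_weak_compositions_Suc[OF a] step sum_distrib_left)
  also have "\<dots> = (kernel_transform w ^^ (v - a)) \<sigma> M"
    using Suc.hyps(1)[of "Suc a"] a d by (simp add: kernel_transform_def flip: Suc.hyps(2))
  finally show ?case .
qed

lemma infsum_supported_eq_sum:
  fixes f :: "(nat \<Rightarrow> nat) \<Rightarrow> 'a :: {comm_monoid_add, t2_space}"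
  assumes "\<And>n. K < tail_sum v n a \<Longrightarrow> f n = 0"
  shows "(\<Sum>\<^sub>\<infinity> n\<in>{n. \<forall>i. i \<notin> {a..v} \<longrightarrow> n i = 0}. f n) = (\<Sum>M\<le>K. \<Sum>n\<in>weak_compositions v a M. f n)"
proof -
  define F where "F = {n. (\<forall>i. i \<notin> {a..v} \<longrightarrow> n i = 0) \<and> tail_sum v n a \<le> K}"
  have "(\<Sum>\<^sub>\<infinity> n\<in>{n. \<forall>i. i \<notin> {a..v} \<longrightarrow> n i = 0}. f n) = (\<Sum>\<^sub>\<infinity> n\<in>F. f n)"
    using assms by (intro infsum_cong_neutral) (auto simp: F_def)
  also have "\<dots> = (\<Sum>n\<in>F. f n)"
    using finite_bounded_supported by (simp add: F_def)
  also have "\<dots> = (\<Sum>M\<le>K. \<Sum>n\<in>{n \<in> F. tail_sum v n a = M}. f n)"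
    using finite_bounded_supported by (intro sum.group[symmetric]) (auto simp: F_def)
  also have "\<dots> = (\<Sum>M\<le>K. \<Sum>n\<in>weak_compositions v a M. f n)"
    by (intro sum.cong refl) (auto simp: F_def weak_compositions_def)
  finally show ?thesis .
qed

lemma exponent_split_chain_seed:
  assumes "j \<noteq> 0"
  shows "((2 * int v + 1) * j\<^sup>2 - 3 * j) div 2 - (int v - 1) = int (v * nat (j\<^sup>2 - 1) + nat (alpha_exp j))"
proof -
  have "0 < j\<^sup>2"
    using assms by simp
  then have nat_part: "int (v * nat (j\<^sup>2 - 1) + nat (alpha_exp j)) = int v * (j\<^sup>2 - 1) + alpha_exp j"
    using alpha_exp_nonneg[of j] by simp
  have "(2 * int v + 1) * j\<^sup>2 - 3 * j = (j - 1) * (j - 2) + 2 * (int v * j\<^sup>2 - 1)"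
    by (simp add: algebra_simps power2_eq_square)
  moreover have "((j - 1) * (j - 2) + 2 * (int v * j\<^sup>2 - 1)) div 2 = alpha_exp j + (int v * j\<^sup>2 - 1)"
    unfolding alpha_exp_def by presburger
  ultimately show ?thesis
    unfolding nat_part by (simp add: algebra_simps)
qed

lemma prod_bailey_kernel_tail_sum:
  "(\<Prod>i = 1..<v. bailey_kernel q (tail_sum v n i) (tail_sum v n (Suc i)))
   = q ^ (\<Sum>i = 2..v. (tail_sum v n i + 2) * tail_sum v n i) / (\<Prod>i = 1..<v. qpoch q q (n i))"
proof -
  define N where "N = tail_sum v n"
  have "bailey_kernel q (N i) (N (Suc i)) = q ^ ((N (Suc i) + 2) * N (Suc i)) / qpoch q q (n i)"
    if "i < v" for i
    using that tail_sum_Suc[of i v n] by (simp add: N_def bailey_kernel_def algebra_simps mult_2 qfact_inv_of_nat)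
  then have "(\<Prod>i = 1..<v. bailey_kernel q (N i) (N (Suc i)))
      = (\<Prod>i = 1..<v. q ^ ((N (Suc i) + 2) * N (Suc i))) / (\<Prod>i = 1..<v. qpoch q q (n i))"
    by (simp add: prod_dividef)
  also have "(\<Prod>i = 1..<v. q ^ ((N (Suc i) + 2) * N (Suc i))) = q ^ (\<Sum>i = 2..v. (N i + 2) * N i)"
  proof -
    have "(\<Prod>i = 1..<v. g (Suc i)) = prod g {2..v}" for g :: "nat \<Rightarrow> complex"
      using prod.shift_bounds_Suc_ivl[of g 1 v] by (simp add: atLeastLessThanSuc_atLeastAtMost numeral_2_eq_2)
    then show ?thesis
      unfolding power_sum .
  qed
  finally show ?thesis
    unfolding N_def .
qed

lemma bailey_kernel_chain_weight:
  assumes "1 \<le> v"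
  shows "bailey_kernel q l (tail_sum v n 1) * chain_weight (bailey_kernel q) \<beta> v 1 n
       = q ^ (\<Sum>i = 1..v. (tail_sum v n i + 2) * tail_sum v n i) / (\<Prod>i = 1..v - 1. qpoch q q (n i))
         * qfact_inv q (int l - int (tail_sum v n 1)) * \<beta> (n v)"
proof -
  define N where "N = tail_sum v n"
  have "(N 1 + 2) * N 1 = N 1 * N 1 + 2 * N 1"
    by (simp add: algebra_simps)
  then have "bailey_kernel q l (N 1) = q ^ ((N 1 + 2) * N 1) * qfact_inv q (int l - int (N 1))"
    by (simp only: bailey_kernel_def)
  then have "bailey_kernel q l (N 1) * chain_weight (bailey_kernel q) \<beta> v 1 n
      = q ^ ((N 1 + 2) * N 1) * qfact_inv q (int l - int (N 1))
        * (q ^ (\<Sum>i = 2..v. (N i + 2) * N i) / (\<Prod>i = 1..<v. qpoch q q (n i))) * \<beta> (N v)"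
    unfolding chain_weight_def N_def prod_bailey_kernel_tail_sum by (simp only: mult.assoc)
  also have "\<dots> = q ^ ((N 1 + 2) * N 1 + (\<Sum>i = 2..v. (N i + 2) * N i)) / (\<Prod>i = 1..<v. qpoch q q (n i))
        * qfact_inv q (int l - int (N 1)) * \<beta> (N v)"
    by (simp add: power_add divide_inverse ac_simps)
  also have "(N 1 + 2) * N 1 + (\<Sum>i = 2..v. (N i + 2) * N i) = (\<Sum>i = 1..v. (N i + 2) * N i)"
    using assms by (simp add: sum.atLeast_Suc_atMost numeral_2_eq_2)
  also have "N v = n v"
    by (simp add: N_def tail_sum_def)
  also have "{1..<v} = {1..v - 1}"
    using assms by auto
  finally show ?thesis
    by (simp add: N_def)
qed

lemma seed_chain_summand:
  assumes q: "norm q < 1" and v: "1 \<le> v" and L: "0 < L"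
  shows "(1 + q + q\<^sup>2) * (q ^ ((\<Sum>i = 1..v. (tail_sum v n i + 2) * tail_sum v n i) + n v)
          / ((\<Prod>i = 1..v - 1. qpoch q q (n i)) * qpoch q q (2 * n v + 2))
          * (qpoch (-1) (q ^ 3) (n v) / qpoch (-1) q (n v))
          * (1 - q ^ (1 + n v))
          * qpoch q q (2 * L) * qfact_inv q (int L - 1 - int (tail_sum v n 1)))
       = qpoch q q (2 * L) * (bailey_kernel q (L - 1) (tail_sum v n 1) * chain_weight (bailey_kernel q) (beta_seed q) v 1 n)"
proof -
  have "qpoch (-1) (q ^ 3) (n v) / qpoch (-1) q (n v) = (\<Prod>k<n v. 1 - q ^ k + q ^ (2*k))"
    using qpoch_minus_one_cube[of q "n v"] qpoch_minus_one_nonzero[OF q, of "n v"] by simp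
  then have "(1 + q + q\<^sup>2) * (q ^ ((\<Sum>i = 1..v. (tail_sum v n i + 2) * tail_sum v n i) + n v)
          / ((\<Prod>i = 1..v - 1. qpoch q q (n i)) * qpoch q q (2 * n v + 2))
          * (qpoch (-1) (q ^ 3) (n v) / qpoch (-1) q (n v))
          * (1 - q ^ (1 + n v))
          * qpoch q q (2 * L) * qfact_inv q (int L - 1 - int (tail_sum v n 1)))
      = qpoch q q (2 * L)
        * (q ^ (\<Sum>i = 1..v. (tail_sum v n i + 2) * tail_sum v n i) / (\<Prod>i = 1..v - 1. qpoch q q (n i))
           * qfact_inv q (int (L - 1) - int (tail_sum v n 1)) * beta_seed q (n v))"
    unfolding beta_seed_def qfact_inv_of_nat using L by (simp add: power_add divide_inverse ac_simps)
  then show ?thesis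
    using bailey_kernel_chain_weight[OF v] by simp
qed

lemma infsum_seed_chain:
  fixes q :: complex
  assumes q: "norm q < 1" and v: "1 \<le> v" and L: "0 < L"
  shows "(1 + q + q\<^sup>2) * (\<Sum>\<^sub>\<infinity> n \<in> {n :: nat \<Rightarrow> nat. \<forall>i. i \<notin> {1..v} \<longrightarrow> n i = 0}.
        (let N = (\<lambda>i. \<Sum>k = i..v. n k) in
          q ^ ((\<Sum>i = 1..v. (N i + 2) * N i) + n v)
          / ((\<Prod>i = 1..v - 1. qpoch q q (n i)) * qpoch q q (2 * n v + 2))
          * (qpoch (-1) (q ^ 3) (n v) / qpoch (-1) q (n v))
          * (1 - q ^ (1 + n v))
          * qpoch q q (2 * L) * qfact_inv q (int L - 1 - int (N 1))))
     = qpoch q q (2 * L) * (kernel_transform (bailey_kernel q) ^^ v) (beta_seed q) (L - 1)"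
    (is "_ * (\<Sum>\<^sub>\<infinity> n \<in> _. ?s n) = _")
proof -
  have summand: "(1 + q + q\<^sup>2) * ?s n
      = qpoch q q (2 * L) * (bailey_kernel q (L - 1) (tail_sum v n 1) * chain_weight (bailey_kernel q) (beta_seed q) v 1 n)"
    for n
    using seed_chain_summand[OF q v L, of n] unfolding Let_def by (simp only: tail_sum_def)
  have "(1 + q + q\<^sup>2) * (\<Sum>\<^sub>\<infinity> n \<in> {n. \<forall>i. i \<notin> {1..v} \<longrightarrow> n i = 0}. ?s n)
      = (1 + q + q\<^sup>2) * (\<Sum>M\<le>L - 1. \<Sum>n\<in>weak_compositions v 1 M. ?s n)"
  proof (rule arg_cong[OF infsum_supported_eq_sum])
    fix n
    assume "L - 1 < tail_sum v n 1"
    then have "qfact_inv q (int L - 1 - int (tail_sum v n 1)) = 0"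
      using L by (intro qfact_inv_neg) linarith
    then show "?s n = 0"
      unfolding Let_def tail_sum_def[symmetric] by simp
  qed
  also have "\<dots> = (\<Sum>M\<le>L - 1. \<Sum>n\<in>weak_compositions v 1 M. (1 + q + q\<^sup>2) * ?s n)"
    by (simp only: sum_distrib_left)
  also have "\<dots> = (\<Sum>M\<le>L - 1. \<Sum>n\<in>weak_compositions v 1 M. qpoch q q (2 * L)
      * (bailey_kernel q (L - 1) M * chain_weight (bailey_kernel q) (beta_seed q) v 1 n))"
    by (intro sum.cong refl) (subst summand, simp add: weak_compositions_def)
  also have "\<dots> = qpoch q q (2 * L) * (\<Sum>M\<le>L - 1. bailey_kernel q (L - 1) M
          * (\<Sum>n\<in>weak_compositions v 1 M. chain_weight (bailey_kernel q) (beta_seed q) v 1 n))"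
    by (simp add: sum_distrib_left)
  also have "\<dots> = qpoch q q (2 * L) * (kernel_transform (bailey_kernel q) ^^ v) (beta_seed q) (L - 1)"
  proof -
    obtain k where "v = Suc k"
      using v by (cases v) auto
    then show ?thesis
      by (simp add: sum_chain_weight kernel_transform_def)
  qed
  finally show ?thesis .
qed

lemma infsum_Legendre_qbinom:
  "(\<Sum>\<^sub>\<infinity> j :: int. of_int (Legendre j 3)
      * q powi (((2 * int v + 1) * j ^ 2 - 3 * j) div 2 - (int v - 1)) * qbinom q (2 * int L) (int L + j))
   = qpoch q q (2 * L) * (\<Sum>j = -int L..int L.
      q ^ (v * nat (j\<^sup>2 - 1)) * alpha_seed q j * qfact_inv q (int L - j) * qfact_inv q (int L + j))"
proof -
  define t where "t j = q ^ (v * nat (j\<^sup>2 - 1)) * alpha_seed q j * qfact_inv q (int L - j) * qfact_inv q (int L + j)"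
    for j
  have "of_int (Legendre j 3) * q powi (((2 * int v + 1) * j ^ 2 - 3 * j) div 2 - (int v - 1))
      * qbinom q (2 * int L) (int L + j) = qpoch q q (2 * L) * t j" for j
  proof (cases "j = 0")
    case True
    then show ?thesis
      by (simp add: t_def Legendre_mod_3)
  next
    case False
    have "qbinom q (2 * int L) (int L + j) = qpoch q q (2 * L) * qfact_inv q (int L + j) * qfact_inv q (int L - j)"
      by (simp add: qbinom_eq_qfact_inv nat_mult_distrib)
    then show ?thesis
      unfolding exponent_split_chain_seed[OF False] power_int_of_nat
      by (simp add: t_def alpha_seed_def power_add ac_simps)
  qed
  then have "(\<Sum>\<^sub>\<infinity> j :: int. of_int (Legendre j 3)
      * q powi (((2 * int v + 1) * j ^ 2 - 3 * j) div 2 - (int v - 1)) * qbinom q (2 * int L) (int L + j))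
      = (\<Sum>\<^sub>\<infinity> j \<in> {-int L..int L}. qpoch q q (2 * L) * t j)"
    by (intro infsum_cong_neutral) (auto simp: t_def qfact_inv_neg)
  then show ?thesis
    by (simp add: t_def sum_distrib_left)
qed

theorem mainTheorem7:
  fixes q :: complex and v L :: nat
  assumes "norm q < 1" and "v \<ge> 1"
  shows "(1 - q ^ 3) / (1 - q) *
     (\<Sum>\<^sub>\<infinity> n \<in> {n :: nat \<Rightarrow> nat. \<forall>i. i \<notin> {1..v} \<longrightarrow> n i = 0}.
        (let N = (\<lambda>i. \<Sum>k = i..v. n k) in
          q ^ ((\<Sum>i = 1..v. (N i + 2) * N i) + n v)
          / ((\<Prod>i = 1..v - 1. qpoch q q (n i)) * qpoch q q (2 * n v + 2))
          * (qpoch (-1) (q ^ 3) (n v) / qpoch (-1) q (n v))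
          * (1 - q ^ (1 + n v))
          * qpoch q q (2 * L) * qfact_inv q (int L - 1 - int (N 1))))
   = (\<Sum>\<^sub>\<infinity> j :: int.
        of_int (Legendre j 3)
        * q powi (((2 * int v + 1) * j ^ 2 - 3 * j) div 2 - (int v - 1))
        * qbinom q (2 * int L) (int L + j))"
proof -
  have "1 - q ^ 3 = (1 - q) * (1 + q + q\<^sup>2)" and "1 - q \<noteq> 0"
    using power_Suc_neq_one[OF assms(1), of 0] by (auto simp: algebra_simps power2_eq_square power3_eq_cube)
  then have factor: "(1 - q ^ 3) / (1 - q) = 1 + q + q\<^sup>2"
    by simp
  show ?thesis
  proof (cases "L = 0")
    case True
    then show ?thesis
      unfolding infsum_Legendre_qbinom by (simp add: qfact_inv_neg Let_def)
  next
    case False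
    then have "0 < L"
      by simp
    have "bailey_pair q (\<lambda>j. q ^ (v * nat (j\<^sup>2 - 1)) * alpha_seed q j)
        ((kernel_transform (bailey_kernel q) ^^ v) (beta_seed q))"
      using bailey_chain[OF assms(1) bailey_pair_seed[OF assms(1)]] by simp
    then have chain: "(kernel_transform (bailey_kernel q) ^^ v) (beta_seed q) (L - 1) = (\<Sum>j = -int L..int L.
        q ^ (v * nat (j\<^sup>2 - 1)) * alpha_seed q j * qfact_inv q (int L - j) * qfact_inv q (int L + j))"
      using \<open>0 < L\<close> by (simp add: bailey_pair_def)
    show ?thesis
      unfolding factor infsum_seed_chain[OF assms \<open>0 < L\<close>] chain infsum_Legendre_qbinom ..
  qed
qed

end
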